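(* Fix $\Sigma\in\mathcal{Q}^+_{m,n}$, indices $k,l\in\mathcal{V}_2$ with $k\ge l$, and numbers $\lambda_{hj}\ge0$ for $h,j\in\mathcal{V}_1$, $h\ge j$. Consider $$\min_{\gamma_{kl}\ge0}\ \sum_{h\ge j}\Big[\max\{\gamma_{kl},\lambda_{hj}\}q_{hk,jl}(\Sigma)-\alpha_{hk,jl}\log\max\{\lambda_{hj},\gamma_{kl}\}\Big]+\varepsilon\gamma_{kl}.$$ Let $\tilde\lambda_1<\dots<\tilde\lambda_{\tilde u_1}$ ($\tilde u_1\le m_1(m_1+1)/2$) be the distinct values among $\{\lambda_{hj}:h\ge j\}$ in increasing order, and define $\mathcal{C}_u=\{(h,j):h\ge j,\ \lambda_{hj}\le\tilde\lambda_u\}$, $\mathcal{N}_1=\{\tilde\lambda_u:u=1,\dots,\tilde u_1\}$, $\mathcal{N}_2=\{\tilde\gamma_{kl,u}:u=0,1,\dots,\tilde u_1\}$, where $\tilde\gamma_{kl,0}=0$ and, for $u>0$, $$\tilde\gamma_{kl,u}=\frac{\sum_{(h,j)\in\mathcal{C}_u}\alpha_{hk,jl}}{\sum_{(h,j)\in\mathcal{C}_u}q_{hk,jl}(\Sigma)+\varepsilon}.$$ Then this problem admits a solution and all its points of minimum lie in $\mathcal{M}_2=\mathcal{N}_1\cup\mathcal{N}_2$.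
   Context: Let $m_1,m_2,n\in\mathbb{N}$, $m=m_1m_2$, $\mathcal{V}_1=\{1,\dots,m_1\}$, $\mathcal{V}_2=\{1,\dots,m_2\}$, $\varepsilon>0$. $\mathcal{Q}^+_{m,n}$ is the set of matrix pseudo-polynomials $\Sigma(e^{i\vartheta})=S_0+\frac12\sum_{t=1}^n[S_te^{-it\vartheta}+S_t^Te^{it\vartheta}]$ ($S_0=S_0^T$, $S_t\in\mathbb{R}^{m\times m}$) with $\Sigma(e^{i\vartheta})\succ0$ for all $\vartheta\in[-\pi,\pi]$. For $M\in\mathbb{R}^{m\times m}$, $(M)_{hk,jl}$ is the entry in row $(h-1)m_2+k$ and column $(j-1)m_2+l$. $q_{hk,jl}(\Sigma)=\max_{t=0,\dots,n}\max\{|(S_t)_{hk,jl}|,|(S_t)_{hl,jk}|,|(S_t)_{jl,hk}|,|(S_t)_{jk,hl}|\}$. For $h\ge j$, $k\ge l$: $\alpha_{hk,jl}=n+1$ if $h=j,k=l$; $2n+1$ if $h=j,k>l$ or $h>j,k=l$; $4n+2$ if $h>j,k>l$. The objective is taken to be $+\infty$ if some logarithm has argument $0$. *)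

theory Defs
  imports "HOL-Analysis.Analysis" "HOL-Library.Extended_Real"
begin

text \<open>Matrix coefficients S_t (t = 0..n) of size m x m are represented as
  S :: nat => nat => nat => real, with S t a b the (a,b) entry of S_t,
  rows/columns indexed 1..m (1-based, as in the paper).\<close>

definition Sigma_val :: "(nat \<Rightarrow> nat \<Rightarrow> nat \<Rightarrow> real) \<Rightarrow> nat \<Rightarrow> real \<Rightarrow> nat \<Rightarrow> nat \<Rightarrow> complex" where
  "Sigma_val S n \<theta> a b =
     complex_of_real (S 0 a b) + (1/2) * (\<Sum>t=1..n.
        complex_of_real (S t a b) * exp (- \<i> * of_nat t * of_real \<theta>)
      + complex_of_real (S t b a) * exp (\<i> * of_nat t * of_real \<theta>))"

definition Qplus :: "nat \<Rightarrow> nat \<Rightarrow> (nat \<Rightarrow> nat \<Rightarrow> nat \<Rightarrow> real) \<Rightarrow> bool" where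
  "Qplus m n S \<longleftrightarrow>
     (\<forall>a\<in>{1..m}. \<forall>b\<in>{1..m}. S 0 a b = S 0 b a) \<and>
     (\<forall>\<theta>\<in>{-pi..pi}. \<forall>x :: nat \<Rightarrow> complex. (\<exists>a\<in>{1..m}. x a \<noteq> 0) \<longrightarrow>
        (let v = (\<Sum>a\<in>{1..m}. \<Sum>b\<in>{1..m}. cnj (x a) * Sigma_val S n \<theta> a b * x b)
         in Im v = 0 \<and> Re v > 0))"

definition blk :: "nat \<Rightarrow> (nat \<Rightarrow> nat \<Rightarrow> real) \<Rightarrow> nat \<Rightarrow> nat \<Rightarrow> nat \<Rightarrow> nat \<Rightarrow> real" where
  "blk m2 M h k j l = M ((h - 1) * m2 + k) ((j - 1) * m2 + l)"

definition qcoef :: "nat \<Rightarrow> nat \<Rightarrow> (nat \<Rightarrow> nat \<Rightarrow> nat \<Rightarrow> real) \<Rightarrow> nat \<Rightarrow> nat \<Rightarrow> nat \<Rightarrow> nat \<Rightarrow> real" where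
  "qcoef m2 n S h k j l =
     Max ((\<lambda>t. max (max \<bar>blk m2 (S t) h k j l\<bar> \<bar>blk m2 (S t) h l j k\<bar>)
                   (max \<bar>blk m2 (S t) j l h k\<bar> \<bar>blk m2 (S t) j k h l\<bar>)) ` {0..n})"

definition alpha :: "nat \<Rightarrow> nat \<Rightarrow> nat \<Rightarrow> nat \<Rightarrow> nat \<Rightarrow> real" where
  "alpha n h k j l =
     (if h = j \<and> k = l then real n + 1
      else if h = j \<or> k = l then 2 * real n + 1
      else 4 * real n + 2)"

definition pairs :: "nat \<Rightarrow> (nat \<times> nat) set" where
  "pairs m1 = {(h, j). h \<in> {1..m1} \<and> j \<in> {1..m1} \<and> j \<le> h}"

definition objective :: "nat \<Rightarrow> nat \<Rightarrow> nat \<Rightarrow> (nat \<Rightarrow> nat \<Rightarrow> nat \<Rightarrow> real) \<Rightarrow> real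
    \<Rightarrow> nat \<Rightarrow> nat \<Rightarrow> (nat \<Rightarrow> nat \<Rightarrow> real) \<Rightarrow> real \<Rightarrow> ereal" where
  "objective m1 m2 n S \<epsilon> k l lam \<gamma> =
     (if \<exists>(h, j)\<in>pairs m1. max (lam h j) \<gamma> = 0 then \<infinity>
      else ereal ((\<Sum>(h, j)\<in>pairs m1.
                     max \<gamma> (lam h j) * qcoef m2 n S h k j l
                   - alpha n h k j l * ln (max (lam h j) \<gamma>)) + \<epsilon> * \<gamma>))"

text \<open>C for threshold value v (v ranges over the distinct lambda values):
  C_u = {(h,j) : h>=j, lam h j <= lambda~_u}.\<close>
definition Cset :: "nat \<Rightarrow> (nat \<Rightarrow> nat \<Rightarrow> real) \<Rightarrow> real \<Rightarrow> (nat \<times> nat) set" where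
  "Cset m1 lam v = {(h, j) \<in> pairs m1. lam h j \<le> v}"

definition gamma_tilde :: "nat \<Rightarrow> nat \<Rightarrow> nat \<Rightarrow> (nat \<Rightarrow> nat \<Rightarrow> nat \<Rightarrow> real) \<Rightarrow> real
    \<Rightarrow> nat \<Rightarrow> nat \<Rightarrow> (nat \<Rightarrow> nat \<Rightarrow> real) \<Rightarrow> real \<Rightarrow> real" where
  "gamma_tilde m1 m2 n S \<epsilon> k l lam v =
     (\<Sum>(h, j)\<in>Cset m1 lam v. alpha n h k j l) /
     ((\<Sum>(h, j)\<in>Cset m1 lam v. qcoef m2 n S h k j l) + \<epsilon>)"

definition N1 :: "nat \<Rightarrow> (nat \<Rightarrow> nat \<Rightarrow> real) \<Rightarrow> real set" where
  "N1 m1 lam = (\<lambda>(h, j). lam h j) ` pairs m1"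

definition N2 :: "nat \<Rightarrow> nat \<Rightarrow> nat \<Rightarrow> (nat \<Rightarrow> nat \<Rightarrow> nat \<Rightarrow> real) \<Rightarrow> real
    \<Rightarrow> nat \<Rightarrow> nat \<Rightarrow> (nat \<Rightarrow> nat \<Rightarrow> real) \<Rightarrow> real set" where
  "N2 m1 m2 n S \<epsilon> k l lam = insert 0 (gamma_tilde m1 m2 n S \<epsilon> k l lam ` N1 m1 lam)"

end

theory Submission imports Defs begin

text \<open>Between two consecutive values of \<open>\<lambda>\<close> the objective has the form
  \<open>A \<gamma> - B log \<gamma> + const\<close>, where \<open>A\<close> is \<open>\<epsilon>\<close> plus the sum of the \<open>q\<close> and \<open>B\<close> the sum of the
  \<open>\<alpha>\<close> over the pairs with \<open>\<lambda>\<^sub>h\<^sub>j\<close> below \<open>\<gamma>\<close>. Such a function decreases strictly up to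
  \<open>B / A\<close> and increases strictly beyond it, and \<open>B / A\<close> is exactly \<open>gamma_tilde\<close> at the
  largest \<open>\<lambda>\<^sub>h\<^sub>j\<close> below \<open>\<gamma>\<close>. So a point outside \<open>N1 \<union> N2\<close> is strictly improved by moving
  towards \<open>B / A\<close> until either \<open>B / A\<close> or a breakpoint \<open>\<lambda>\<^sub>h\<^sub>j\<close> is reached; both lie in the
  finite set \<open>N1 \<union> N2\<close>, whose best element is therefore the global minimum.\<close>

lemma minimum_from_finite_dominating_set:
  fixes f :: "'a \<Rightarrow> 'b::linorder"
  assumes "finite M" "M \<noteq> {}" "M \<subseteq> S"
    and dominated: "\<And>x. x \<in> S \<Longrightarrow> x \<notin> M \<Longrightarrow> \<exists>c\<in>M. f c < f x"
  shows "(\<exists>x0\<in>S. \<forall>x\<in>S. f x0 \<le> f x) \<and> (\<forall>x0\<in>S. (\<forall>x\<in>S. f x0 \<le> f x) \<longrightarrow> x0 \<in> M)"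
proof
  define c0 where "c0 = arg_min_on f M"
  have "c0 \<in> M" using arg_min_if_finite(1)[OF assms(1,2)] unfolding c0_def .
  have c0_least: "f c0 \<le> f c" if "c \<in> M" for c
    using arg_min_least[OF assms(1,2) that] unfolding c0_def .
  have "f c0 \<le> f x" if "x \<in> S" for x
  proof (cases "x \<in> M")
    case True
    then show ?thesis by (rule c0_least)
  next
    case False
    then obtain c where "c \<in> M" "f c < f x" using dominated[OF \<open>x \<in> S\<close> False] by blast
    then show ?thesis using c0_least[of c] by simp
  qed
  then show "\<exists>x0\<in>S. \<forall>x\<in>S. f x0 \<le> f x" using \<open>c0 \<in> M\<close> assms(3) by blast
next
  show "\<forall>x0\<in>S. (\<forall>x\<in>S. f x0 \<le> f x) \<longrightarrow> x0 \<in> M"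
  proof (intro ballI impI)
    fix x0 assume "x0 \<in> S" and x0_least: "\<forall>x\<in>S. f x0 \<le> f x"
    show "x0 \<in> M"
    proof (rule ccontr)
      assume "x0 \<notin> M"
      then obtain c where "c \<in> M" "f c < f x0" using dominated \<open>x0 \<in> S\<close> by blast
      moreover have "f x0 \<le> f c" using x0_least \<open>c \<in> M\<close> assms(3) by blast
      ultimately show False by simp
    qed
  qed
qed

lemma affine_minus_ln_strict_mono_on_ge:
  fixes A B x y :: real
  assumes "0 < A" "0 \<le> B" "B / A \<le> x" "x < y"
  shows "A * x - B * ln x < A * y - B * ln y"
proof (cases "B = 0")
  case True
  then show ?thesis using assms by simp
next
  case False
  then have "0 < B" using assms(2) by simp
  then have "0 < x" using assms(1,3) by (meson divide_pos_pos less_le_trans)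
  have "ln y - ln x < (y - x) / x"
    using ln_diff_less[of y x] \<open>0 < x\<close> assms(4) by simp
  then have "B * (ln y - ln x) < B * ((y - x) / x)"
    using \<open>0 < B\<close> by (rule mult_strict_left_mono)
  also have "\<dots> = (B / x) * (y - x)" by simp
  also have "\<dots> \<le> A * (y - x)"
  proof (rule mult_right_mono)
    show "B / x \<le> A" using assms(1,3) \<open>0 < x\<close> by (simp add: field_simps)
  qed (use assms(4) in simp)
  finally show ?thesis by (simp add: algebra_simps)
qed

lemma affine_minus_ln_strict_antimono_on_le:
  fixes A B x y :: real
  assumes "0 < A" "0 < x" "x < y" "y \<le> B / A"
  shows "A * y - B * ln y < A * x - B * ln x"
proof -
  have "0 < y" using assms(2,3) by simp
  have "A * y \<le> B" using assms(1,4) \<open>0 < y\<close> by (simp add: le_divide_eq mult.commute)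
  then have "0 < B" using mult_pos_pos[OF assms(1) \<open>0 < y\<close>] by linarith
  have "A * (y - x) = (A * y) * ((y - x) / y)" using \<open>0 < y\<close> by simp
  also have "\<dots> \<le> B * ((y - x) / y)"
    using \<open>A * y \<le> B\<close> \<open>0 < y\<close> assms(3) by (intro mult_right_mono) simp_all
  also have "\<dots> < B * (ln y - ln x)"
  proof (rule mult_strict_left_mono)
    show "(y - x) / y < ln y - ln x"
      using ln_diff_less[of x y] assms(2,3) \<open>0 < y\<close> by (simp add: diff_divide_distrib)
  qed (fact \<open>0 < B\<close>)
  finally show ?thesis by (simp add: algebra_simps)
qed

locale max_log_problem =
  fixes P :: "'a set" and L Q \<alpha> :: "'a \<Rightarrow> real" and \<epsilon> :: real
  assumes finite_P: "finite P"
    and L_nonneg: "p \<in> P \<Longrightarrow> 0 \<le> L p"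
    and Q_nonneg: "p \<in> P \<Longrightarrow> 0 \<le> Q p"
    and \<alpha>_pos: "p \<in> P \<Longrightarrow> 0 < \<alpha> p"
    and \<epsilon>_pos: "0 < \<epsilon>"
begin

definition cost :: "real \<Rightarrow> ereal" where
  "cost y = (if \<exists>p\<in>P. max (L p) y = 0 then \<infinity>
     else ereal ((\<Sum>p\<in>P. max y (L p) * Q p - \<alpha> p * ln (max (L p) y)) + \<epsilon> * y))"

definition slope :: "real \<Rightarrow> real" where
  "slope v = (\<Sum>p\<in>{p\<in>P. L p \<le> v}. Q p) + \<epsilon>"

definition log_weight :: "real \<Rightarrow> real" where
  "log_weight v = (\<Sum>p\<in>{p\<in>P. L p \<le> v}. \<alpha> p)"

definition stationary_point :: "real \<Rightarrow> real" where
  "stationary_point v = log_weight v / slope v"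

definition candidates :: "real set" where
  "candidates = L ` P \<union> insert 0 (stationary_point ` L ` P)"

lemma slope_pos: "0 < slope v"
proof -
  have "0 \<le> (\<Sum>p\<in>{p\<in>P. L p \<le> v}. Q p)" using Q_nonneg by (intro sum_nonneg) auto
  then show ?thesis using \<epsilon>_pos by (simp add: slope_def)
qed

lemma log_weight_nonneg: "0 \<le> log_weight v"
  unfolding log_weight_def using \<alpha>_pos by (intro sum_nonneg) (auto intro: less_imp_le)

lemma log_weight_pos: "{p\<in>P. L p \<le> v} \<noteq> {} \<Longrightarrow> 0 < log_weight v"
  unfolding log_weight_def using finite_P \<alpha>_pos by (intro sum_pos) auto

lemma stationary_point_nonneg: "0 \<le> stationary_point v"
  unfolding stationary_point_def using log_weight_nonneg slope_pos by (simp add: divide_nonneg_pos)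

lemma finite_candidates: "finite candidates"
  unfolding candidates_def using finite_P by simp

lemma candidates_nonneg: "c \<in> candidates \<Longrightarrow> 0 \<le> c"
  unfolding candidates_def using L_nonneg stationary_point_nonneg by blast

lemma stationary_point_in_candidates: "stationary_point v \<in> candidates"
proof (cases "{p\<in>P. L p \<le> v} = {}")
  case True
  then have "stationary_point v = 0"
    unfolding stationary_point_def log_weight_def True by simp
  then show ?thesis by (simp add: candidates_def)
next
  case False
  define a where "a = Max (L ` {p\<in>P. L p \<le> v})"
  have "finite (L ` {p\<in>P. L p \<le> v})" using finite_P by simp
  then have a_in: "a \<in> L ` {p\<in>P. L p \<le> v}"
    and a_max: "\<And>p. p \<in> P \<Longrightarrow> L p \<le> v \<Longrightarrow> L p \<le> a"
    using False unfolding a_def by auto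
  then have "{p\<in>P. L p \<le> a} = {p\<in>P. L p \<le> v}" by force
  then have "stationary_point v = stationary_point a"
    by (simp add: stationary_point_def slope_def log_weight_def)
  then show ?thesis using a_in by (auto simp: candidates_def)
qed

text \<open>The closed piece of the objective containing \<open>v\<close>, on which every \<open>max\<close> in \<open>cost\<close> is
  resolved as it is at \<open>v\<close>. The point \<open>0\<close> belongs to it only if no \<open>L p\<close> is \<open>\<le> v\<close>, since
  otherwise a logarithm of \<open>0\<close> would occur.\<close>

definition in_piece :: "real \<Rightarrow> real \<Rightarrow> bool" where
  "in_piece v y \<longleftrightarrow> (\<forall>p\<in>P. L p \<le> v \<longrightarrow> L p \<le> y) \<and> (\<forall>p\<in>P. v < L p \<longrightarrow> y \<le> L p)
                    \<and> (0 < y \<or> (\<forall>p\<in>P. v < L p))"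

lemma in_piece_self: "0 < v \<Longrightarrow> in_piece v v"
  by (auto simp: in_piece_def)

lemma cost_on_piece:
  assumes "0 \<le> v" "in_piece v y"
  shows "cost y = ereal (slope v * y - log_weight v * ln y
                         + (\<Sum>p\<in>{p\<in>P. v < L p}. L p * Q p - \<alpha> p * ln (L p)))"
proof -
  have below: "\<And>p. p \<in> P \<Longrightarrow> L p \<le> v \<Longrightarrow> L p \<le> y"
    and above: "\<And>p. p \<in> P \<Longrightarrow> v < L p \<Longrightarrow> y \<le> L p"
    and y_pos: "0 < y \<or> (\<forall>p\<in>P. v < L p)"
    using assms(2) by (auto simp: in_piece_def)
  define C where "C = {p\<in>P. L p \<le> v}"
  define D where "D = {p\<in>P. v < L p}"
  define f where "f p = max y (L p) * Q p - \<alpha> p * ln (max (L p) y)" for p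
  have "0 < max (L p) y" if "p \<in> P" for p
  proof (cases "L p \<le> v")
    case True
    then have "0 < y" using y_pos that by auto
    then show ?thesis by simp
  next
    case False
    then show ?thesis using assms(1) by simp
  qed
  then have "cost y = ereal ((\<Sum>p\<in>P. f p) + \<epsilon> * y)"
    unfolding cost_def f_def by (metis less_irrefl)
  moreover have "(\<Sum>p\<in>P. f p) = (\<Sum>p\<in>C. f p) + (\<Sum>p\<in>D. f p)"
  proof -
    have "P = C \<union> D" "C \<inter> D = {}" unfolding C_def D_def by auto
    then show ?thesis using finite_P by (simp add: sum.union_disjoint)
  qed
  moreover have "(\<Sum>p\<in>C. f p) = y * (\<Sum>p\<in>C. Q p) - log_weight v * ln y"
  proof -
    have "(\<Sum>p\<in>C. f p) = (\<Sum>p\<in>C. y * Q p - \<alpha> p * ln y)"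
      by (rule sum.cong) (simp_all add: C_def f_def below max_absorb1 max_absorb2)
    then show ?thesis
      by (simp add: C_def log_weight_def sum_subtractf sum_distrib_left sum_distrib_right)
  qed
  moreover have "(\<Sum>p\<in>D. f p) = (\<Sum>p\<in>D. L p * Q p - \<alpha> p * ln (L p))"
    by (rule sum.cong) (simp_all add: D_def f_def above max_absorb1 max_absorb2)
  ultimately show ?thesis by (simp add: slope_def C_def D_def algebra_simps)
qed

lemma cost_less_on_piece:
  assumes "0 \<le> v" "in_piece v y" "in_piece v z"
    and "slope v * y - log_weight v * ln y < slope v * z - log_weight v * ln z"
  shows "cost y < cost z"
  using cost_on_piece[OF assms(1,2)] cost_on_piece[OF assms(1,3)] assms(4) by simp

lemma cost_improvable_downwards:
  assumes "0 < \<gamma>" "\<gamma> \<notin> L ` P" "stationary_point \<gamma> < \<gamma>"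
  shows "\<exists>c\<in>candidates. cost c < cost \<gamma>"
proof -
  define t where "t = stationary_point \<gamma>"
  define y where "y = Max (insert t (L ` {p\<in>P. L p \<le> \<gamma>}))"
  have "t \<in> candidates" unfolding t_def by (rule stationary_point_in_candidates)
  then have "y \<in> candidates"
    using Max_in[of "insert t (L ` {p\<in>P. L p \<le> \<gamma>})"] finite_P
    by (auto simp: y_def candidates_def)
  have "t \<le> y" and y_above: "\<And>p. p \<in> P \<Longrightarrow> L p \<le> \<gamma> \<Longrightarrow> L p \<le> y"
    using finite_P by (auto simp: y_def)
  have "y < \<gamma>"
    using finite_P assms(2,3) by (auto simp: y_def t_def order_le_less)
  have "0 < y \<or> (\<forall>p\<in>P. \<gamma> < L p)"
  proof (cases "{p\<in>P. L p \<le> \<gamma>} = {}")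
    case False
    then have "0 < t"
      using log_weight_pos slope_pos by (simp add: t_def stationary_point_def)
    then show ?thesis using \<open>t \<le> y\<close> by simp
  qed auto
  then have "in_piece \<gamma> y"
    using y_above \<open>y < \<gamma>\<close> by (auto simp: in_piece_def)
  moreover have "slope \<gamma> * y - log_weight \<gamma> * ln y < slope \<gamma> * \<gamma> - log_weight \<gamma> * ln \<gamma>"
    using affine_minus_ln_strict_mono_on_ge slope_pos log_weight_nonneg \<open>t \<le> y\<close> \<open>y < \<gamma>\<close>
    by (simp add: t_def stationary_point_def)
  ultimately have "cost y < cost \<gamma>"
    by (rule cost_less_on_piece[OF less_imp_le[OF assms(1)] _ in_piece_self[OF assms(1)]])
  then show ?thesis using \<open>y \<in> candidates\<close> by blast
qed

lemma cost_improvable_upwards: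
  assumes "0 < \<gamma>" "\<gamma> < stationary_point \<gamma>"
  shows "\<exists>c\<in>candidates. cost c < cost \<gamma>"
proof -
  define t where "t = stationary_point \<gamma>"
  define y where "y = Min (insert t (L ` {p\<in>P. \<gamma> < L p}))"
  have "t \<in> candidates" unfolding t_def by (rule stationary_point_in_candidates)
  then have "y \<in> candidates"
    using Min_in[of "insert t (L ` {p\<in>P. \<gamma> < L p})"] finite_P
    by (auto simp: y_def candidates_def)
  have "y \<le> t" and y_below: "\<And>p. p \<in> P \<Longrightarrow> \<gamma> < L p \<Longrightarrow> y \<le> L p"
    using finite_P by (auto simp: y_def)
  have "\<gamma> < y" using finite_P assms(2) by (auto simp: y_def t_def)
  then have "in_piece \<gamma> y"
    using y_below assms(1) by (auto simp: in_piece_def)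
  moreover have "slope \<gamma> * y - log_weight \<gamma> * ln y < slope \<gamma> * \<gamma> - log_weight \<gamma> * ln \<gamma>"
    using affine_minus_ln_strict_antimono_on_le slope_pos assms(1) \<open>\<gamma> < y\<close> \<open>y \<le> t\<close>
    by (simp add: t_def stationary_point_def)
  ultimately have "cost y < cost \<gamma>"
    by (rule cost_less_on_piece[OF less_imp_le[OF assms(1)] _ in_piece_self[OF assms(1)]])
  then show ?thesis using \<open>y \<in> candidates\<close> by blast
qed

lemma cost_improvable:
  assumes "0 \<le> \<gamma>" "\<gamma> \<notin> candidates"
  shows "\<exists>c\<in>candidates. cost c < cost \<gamma>"
proof -
  have "0 < \<gamma>" "\<gamma> \<notin> L ` P"
    using assms by (auto simp: candidates_def order_le_less)
  moreover have "stationary_point \<gamma> \<noteq> \<gamma>"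
    using stationary_point_in_candidates assms(2) by metis
  ultimately show ?thesis
    using cost_improvable_downwards cost_improvable_upwards by (meson linorder_neqE_linordered_idom)
qed

theorem cost_minimisers:
  "(\<exists>\<gamma>0\<ge>0. \<forall>\<gamma>\<ge>0. cost \<gamma>0 \<le> cost \<gamma>)
   \<and> (\<forall>\<gamma>0\<ge>0. (\<forall>\<gamma>\<ge>0. cost \<gamma>0 \<le> cost \<gamma>) \<longrightarrow> \<gamma>0 \<in> candidates)"
proof -
  have "0 \<in> candidates" by (simp add: candidates_def)
  then have "(\<exists>\<gamma>0\<in>{0..}. \<forall>\<gamma>\<in>{0..}. cost \<gamma>0 \<le> cost \<gamma>)
      \<and> (\<forall>\<gamma>0\<in>{0..}. (\<forall>\<gamma>\<in>{0..}. cost \<gamma>0 \<le> cost \<gamma>) \<longrightarrow> \<gamma>0 \<in> candidates)"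
    using finite_candidates candidates_nonneg cost_improvable
    by (intro minimum_from_finite_dominating_set) auto
  then show ?thesis by auto
qed

end

lemma finite_pairs: "finite (pairs m1)"
  by (rule finite_subset[of _ "{1..m1} \<times> {1..m1}"]) (auto simp: pairs_def)

lemma qcoef_nonneg: "0 \<le> qcoef m2 n S h k j l"
proof -
  have "0 \<le> max (max \<bar>blk m2 (S 0) h k j l\<bar> \<bar>blk m2 (S 0) h l j k\<bar>)
                 (max \<bar>blk m2 (S 0) j l h k\<bar> \<bar>blk m2 (S 0) j k h l\<bar>)" by simp
  also have "\<dots> \<le> qcoef m2 n S h k j l" unfolding qcoef_def by (rule Max_ge) auto
  finally show ?thesis .
qed

lemma alpha_pos: "0 < alpha n h k j l"
  by (simp add: alpha_def)

theorem proposition6: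
  fixes m1 m2 n :: nat and S :: "nat \<Rightarrow> nat \<Rightarrow> nat \<Rightarrow> real" and \<epsilon> :: real
    and k l :: nat and lam :: "nat \<Rightarrow> nat \<Rightarrow> real"
  assumes "\<epsilon> > 0"
    and "Qplus (m1 * m2) n S"
    and "k \<in> {1..m2}" and "l \<in> {1..m2}" and "l \<le> k"
    and "\<And>h j. h \<in> {1..m1} \<Longrightarrow> j \<in> {1..m1} \<Longrightarrow> j \<le> h \<Longrightarrow> lam h j \<ge> 0"
  shows "(\<exists>\<gamma>0\<ge>0. \<forall>\<gamma>\<ge>0. objective m1 m2 n S \<epsilon> k l lam \<gamma>0 \<le> objective m1 m2 n S \<epsilon> k l lam \<gamma>)
       \<and> (\<forall>\<gamma>0\<ge>0. (\<forall>\<gamma>\<ge>0. objective m1 m2 n S \<epsilon> k l lam \<gamma>0 \<le> objective m1 m2 n S \<epsilon> k l lam \<gamma>)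
              \<longrightarrow> \<gamma>0 \<in> N1 m1 lam \<union> N2 m1 m2 n S \<epsilon> k l lam)"
proof -
  interpret max_log_problem "pairs m1" "\<lambda>(h, j). lam h j" "\<lambda>(h, j). qcoef m2 n S h k j l"
    "\<lambda>(h, j). alpha n h k j l" \<epsilon>
    using finite_pairs assms(1,6) qcoef_nonneg alpha_pos
    by unfold_locales (auto simp: pairs_def)
  have "objective m1 m2 n S \<epsilon> k l lam = cost"
    unfolding fun_eq_iff objective_def cost_def by (simp add: split_def)
  moreover have "gamma_tilde m1 m2 n S \<epsilon> k l lam = stationary_point"
    unfolding fun_eq_iff gamma_tilde_def stationary_point_def slope_def log_weight_def Cset_def
    by (simp add: split_def)
  then have "N1 m1 lam \<union> N2 m1 m2 n S \<epsilon> k l lam = candidates"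
    unfolding N1_def N2_def candidates_def by auto
  ultimately show ?thesis using cost_minimisers by simp
qed

end
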